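(* Let $G=(V,E)$ be a directed graph, $s\neq t$ vertices and $k$ an integer with $1\le k\le 4$. Then the edge set of the upper-bound graph $SPG^u_k(s,t)$ equals the edge set of $SPG_k(s,t)$.
   Context: A path from $x$ to $y$ in $G$ is a vertex sequence $x=v_0,\dots,v_m=y$ with $(v_{i-1},v_i)\in E$; its length is $m$ and $V(p)$, $E(p)$ are its vertex and edge sets. A simple path has no repeated vertex. $SPG_k(s,t)$ is the subgraph of $G$ formed by the union of vertex sets and edge sets of all simple paths from $s$ to $t$ of length at most $k$. For a vertex $u$ and integer $l\ge 0$, $EV^*_l(s,u)$ exists iff there is at least one simple path from $s$ to $u$ of length at most $l$ not containing $t$, and then $EV^*_l(s,u)$ is the intersection of $V(p)$ over all such paths. Symmetrically, $EV^*_l(v,t)$ exists iff there is at least one simple path from $v$ to $t$ of length at most $l$ not containing $s$, and then it is the intersection of $V(p)$ over all such paths. The upper-bound graph $SPG^u_k(s,t)$ is the subgraph of $G$ whose edges are exactly those $e(u,v)\in E$ for which there exist integers $k_f,k_b\ge 0$ such that $EV^*_{k_f}(s,u)$ and $EV^*_{k_b}(v,t)$ exist, $k_f+1+k_b\le k$, and $EV^*_{k_f}(s,u)\cap EV^*_{k_b}(v,t)=\emptyset$. *)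

theory Defs
  imports Main
begin

definition is_path :: "'a set \<Rightarrow> ('a \<times> 'a) set \<Rightarrow> 'a list \<Rightarrow> 'a \<Rightarrow> 'a \<Rightarrow> bool" where
  "is_path V E p x y \<longleftrightarrow> p \<noteq> [] \<and> hd p = x \<and> last p = y \<and> set p \<subseteq> V \<and>
     (\<forall>i. i + 1 < length p \<longrightarrow> (p ! i, p ! (i + 1)) \<in> E)"

definition path_len :: "'a list \<Rightarrow> nat" where
  "path_len p = length p - 1"

definition path_edges :: "'a list \<Rightarrow> ('a \<times> 'a) set" where
  "path_edges p = set (zip p (tl p))"

definition spg_edges :: "'a set \<Rightarrow> ('a \<times> 'a) set \<Rightarrow> 'a \<Rightarrow> 'a \<Rightarrow> nat \<Rightarrow> ('a \<times> 'a) set" where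
  "spg_edges V E s t k =
     (\<Union>{path_edges p | p. is_path V E p s t \<and> distinct p \<and> path_len p \<le> k})"

definition fwd_paths :: "'a set \<Rightarrow> ('a \<times> 'a) set \<Rightarrow> 'a \<Rightarrow> 'a \<Rightarrow> nat \<Rightarrow> 'a \<Rightarrow> 'a list set" where
  "fwd_paths V E s t l u = {p. is_path V E p s u \<and> distinct p \<and> path_len p \<le> l \<and> t \<notin> set p}"

definition bwd_paths :: "'a set \<Rightarrow> ('a \<times> 'a) set \<Rightarrow> 'a \<Rightarrow> 'a \<Rightarrow> nat \<Rightarrow> 'a \<Rightarrow> 'a list set" where
  "bwd_paths V E s t l v = {p. is_path V E p v t \<and> distinct p \<and> path_len p \<le> l \<and> s \<notin> set p}"

text \<open>EV*_l(s,u) (meaningful when fwd_paths is nonempty) and EV*_l(v,t).\<close>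
definition EV_fwd :: "'a set \<Rightarrow> ('a \<times> 'a) set \<Rightarrow> 'a \<Rightarrow> 'a \<Rightarrow> nat \<Rightarrow> 'a \<Rightarrow> 'a set" where
  "EV_fwd V E s t l u = (\<Inter>p \<in> fwd_paths V E s t l u. set p)"

definition EV_bwd :: "'a set \<Rightarrow> ('a \<times> 'a) set \<Rightarrow> 'a \<Rightarrow> 'a \<Rightarrow> nat \<Rightarrow> 'a \<Rightarrow> 'a set" where
  "EV_bwd V E s t l v = (\<Inter>p \<in> bwd_paths V E s t l v. set p)"

definition spg_upper_edges :: "'a set \<Rightarrow> ('a \<times> 'a) set \<Rightarrow> 'a \<Rightarrow> 'a \<Rightarrow> nat \<Rightarrow> ('a \<times> 'a) set" where
  "spg_upper_edges V E s t k =
     {(u, v) \<in> E. \<exists>kf kb. fwd_paths V E s t kf u \<noteq> {} \<and> bwd_paths V E s t kb v \<noteq> {} \<and>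
        kf + 1 + kb \<le> k \<and> EV_fwd V E s t kf u \<inter> EV_bwd V E s t kb v = {}}"

end

theory Submission
  imports Defs
begin

text \<open>An edge (u,v) of a simple s-t path splits it into a simple s-u path avoiding t and a
  disjoint simple v-t path avoiding s, whose EV* sets are then disjoint; this gives
  SPG_k \<subseteq> SPG^u_k for every k. Conversely, let EV*_kf(s,u) and EV*_kb(v,t) be disjoint with
  kf + 1 + kb \<le> k \<le> 4. Then kf \<le> 1 or kb \<le> 1, say kf \<le> 1, so every forward path uses only
  the vertices s and u. As u is not in EV*_kb(v,t), some backward path avoids u, and it avoids
  s by definition; the concatenation of the two paths is a simple s-t path of length at most k
  through (u,v).\<close>

lemma path_edges_subset_iff:
  "path_edges p \<subseteq> E \<longleftrightarrow> (\<forall>i. i + 1 < length p \<longrightarrow> (p ! i, p ! (i + 1)) \<in> E)"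
proof (intro iffI allI impI)
  fix i assume "path_edges p \<subseteq> E" "i + 1 < length p"
  moreover have "(p ! i, tl p ! i) \<in> path_edges p"
    using \<open>i + 1 < length p\<close> unfolding path_edges_def set_zip by auto
  ultimately show "(p ! i, p ! (i + 1)) \<in> E"
    by (auto simp: nth_tl)
qed (auto simp: path_edges_def set_zip nth_tl)

lemma is_path_iff_path_edges:
  "is_path V E p x y \<longleftrightarrow> p \<noteq> [] \<and> hd p = x \<and> last p = y \<and> set p \<subseteq> V \<and> path_edges p \<subseteq> E"
  unfolding is_path_def path_edges_subset_iff ..

lemma path_edges_append:
  "A \<noteq> [] \<Longrightarrow> B \<noteq> [] \<Longrightarrow>
    path_edges (A @ B) = path_edges A \<union> {(last A, hd B)} \<union> path_edges B"
  unfolding path_edges_def by (induction A) (auto simp: neq_Nil_conv)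

lemma is_path_append:
  "A \<noteq> [] \<Longrightarrow> B \<noteq> [] \<Longrightarrow> is_path V E (A @ B) x y \<longleftrightarrow>
    is_path V E A x (last A) \<and> is_path V E B (hd B) y \<and> (last A, hd B) \<in> E"
  unfolding is_path_iff_path_edges by (auto simp: path_edges_append)

lemma is_pathD:
  assumes "is_path V E p x y"
  shows "p \<noteq> []" "hd p = x" "last p = y" "x \<in> set p" "y \<in> set p"
  using assms unfolding is_path_def by auto

lemma path_len_append:
  "A \<noteq> [] \<Longrightarrow> B \<noteq> [] \<Longrightarrow> path_len (A @ B) = path_len A + 1 + path_len B"
  unfolding path_len_def by (cases A; cases B) auto

lemma path_edges_split:
  assumes "(u, v) \<in> path_edges p"
  obtains xs ys where "p = xs @ u # v # ys"
proof -
  obtain i where "i < length (tl p)" "p ! i = u" "tl p ! i = v"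
    using assms unfolding path_edges_def in_set_zip by auto
  then have i: "i + 1 < length p" "p ! i = u" "p ! (i + 1) = v"
    by (auto simp: nth_tl)
  have "p = take i p @ p ! i # p ! (i + 1) # drop (i + 2) p"
    using i(1) by (simp add: Cons_nth_drop_Suc)
  then show thesis
    using that i(2,3) by metis
qed

lemma set_path_len_le_1:
  "p \<noteq> [] \<Longrightarrow> path_len p \<le> 1 \<Longrightarrow> set p \<subseteq> {hd p, last p}"
  unfolding path_len_def by (cases p; cases "tl p") auto

lemma EV_fwd_subset: "P \<in> fwd_paths V E s t l u \<Longrightarrow> EV_fwd V E s t l u \<subseteq> set P"
  unfolding EV_fwd_def by blast

lemma EV_bwd_subset: "Q \<in> bwd_paths V E s t l v \<Longrightarrow> EV_bwd V E s t l v \<subseteq> set Q"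
  unfolding EV_bwd_def by blast

lemma endpoints_in_EV_fwd: "s \<in> EV_fwd V E s t l u" "u \<in> EV_fwd V E s t l u"
  unfolding EV_fwd_def fwd_paths_def is_path_def by auto

lemma endpoints_in_EV_bwd: "v \<in> EV_bwd V E s t l v" "t \<in> EV_bwd V E s t l v"
  unfolding EV_bwd_def bwd_paths_def is_path_def by auto

lemma spg_edges_subset_spg_upper_edges:
  "spg_edges V E s t k \<subseteq> spg_upper_edges V E s t k"
proof
  fix e assume "e \<in> spg_edges V E s t k"
  then obtain p where e: "e \<in> path_edges p" and p: "is_path V E p s t" "distinct p"
    and len: "path_len p \<le> k"
    unfolding spg_edges_def by blast
  obtain u v where uv: "e = (u, v)" by fastforce
  obtain xs ys where "p = xs @ u # v # ys"
    using e path_edges_split unfolding uv by metis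
  then obtain P Q where PQ: "p = P @ Q" and P: "P = xs @ [u]" and Q: "Q = v # ys"
    by simp
  have ne: "P \<noteq> []" "Q \<noteq> []" using P Q by auto
  have paths: "is_path V E P s u" "is_path V E Q v t" "(u, v) \<in> E"
    using p(1) is_path_append[OF ne] unfolding PQ by (auto simp: P Q)
  have disj: "distinct P" "distinct Q" "set P \<inter> set Q = {}"
    using p(2) unfolding PQ by auto
  have "s \<in> set P" "t \<in> set Q"
    using is_pathD(4)[OF paths(1)] is_pathD(5)[OF paths(2)] .
  with paths disj have P_fwd: "P \<in> fwd_paths V E s t (path_len P) u"
    and Q_bwd: "Q \<in> bwd_paths V E s t (path_len Q) v"
    unfolding fwd_paths_def bwd_paths_def by auto
  have "EV_fwd V E s t (path_len P) u \<inter> EV_bwd V E s t (path_len Q) v = {}"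
    using EV_fwd_subset[OF P_fwd] EV_bwd_subset[OF Q_bwd] disj(3) by blast
  moreover have "path_len P + 1 + path_len Q \<le> k"
    using len unfolding PQ path_len_append[OF ne] .
  ultimately show "e \<in> spg_upper_edges V E s t k"
    unfolding spg_upper_edges_def uv using paths(3) P_fwd Q_bwd by blast
qed

lemma spg_edges_of_disjoint_paths:
  assumes P: "P \<in> fwd_paths V E s t kf u" and Q: "Q \<in> bwd_paths V E s t kb v"
    and disj: "set P \<inter> set Q = {}" and uv: "(u, v) \<in> E" and len: "kf + 1 + kb \<le> k"
  shows "(u, v) \<in> spg_edges V E s t k"
proof -
  have P_path: "is_path V E P s u" "distinct P" "path_len P \<le> kf"
    using P unfolding fwd_paths_def by auto
  have Q_path: "is_path V E Q v t" "distinct Q" "path_len Q \<le> kb"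
    using Q unfolding bwd_paths_def by auto
  note ends = is_pathD[OF P_path(1)] is_pathD[OF Q_path(1)]
  have "is_path V E (P @ Q) s t"
    using P_path(1) Q_path(1) uv ends by (simp add: is_path_append)
  moreover have "distinct (P @ Q)"
    using P_path(2) Q_path(2) disj by simp
  moreover have "path_len (P @ Q) \<le> k"
    using P_path(3) Q_path(3) len ends by (simp add: path_len_append)
  moreover have "(u, v) \<in> path_edges (P @ Q)"
    using ends by (simp add: path_edges_append)
  ultimately show ?thesis
    unfolding spg_edges_def by blast
qed

lemma disjoint_bwd_path_if_short_fwd_path:
  assumes P: "P \<in> fwd_paths V E s t kf u" and short: "kf \<le> 1"
    and EV: "EV_fwd V E s t kf u \<inter> EV_bwd V E s t kb v = {}"
  obtains Q where "Q \<in> bwd_paths V E s t kb v" "set P \<inter> set Q = {}"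
proof -
  have "u \<in> EV_fwd V E s t kf u"
    by (rule endpoints_in_EV_fwd(2))
  with EV have "u \<notin> EV_bwd V E s t kb v"
    by blast
  then obtain Q where Q: "Q \<in> bwd_paths V E s t kb v" and "u \<notin> set Q"
    unfolding EV_bwd_def by blast
  moreover have "s \<notin> set Q"
    using Q unfolding bwd_paths_def by auto
  moreover have "set P \<subseteq> {s, u}"
    using P short set_path_len_le_1[of P] is_pathD[of V E P s u]
    unfolding fwd_paths_def by auto
  ultimately show thesis
    using that by blast
qed

lemma disjoint_fwd_path_if_short_bwd_path:
  assumes Q: "Q \<in> bwd_paths V E s t kb v" and short: "kb \<le> 1"
    and EV: "EV_fwd V E s t kf u \<inter> EV_bwd V E s t kb v = {}"
  obtains P where "P \<in> fwd_paths V E s t kf u" "set P \<inter> set Q = {}"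
proof -
  have "v \<in> EV_bwd V E s t kb v"
    by (rule endpoints_in_EV_bwd(1))
  with EV have "v \<notin> EV_fwd V E s t kf u"
    by blast
  then obtain P where P: "P \<in> fwd_paths V E s t kf u" and "v \<notin> set P"
    unfolding EV_fwd_def by blast
  moreover have "t \<notin> set P"
    using P unfolding fwd_paths_def by auto
  moreover have "set Q \<subseteq> {v, t}"
    using Q short set_path_len_le_1[of Q] is_pathD[of V E Q v t]
    unfolding bwd_paths_def by auto
  ultimately show thesis
    using that by blast
qed

lemma spg_upper_edges_subset_spg_edges:
  assumes "k \<le> 4"
  shows "spg_upper_edges V E s t k \<subseteq> spg_edges V E s t k"
proof
  fix e assume "e \<in> spg_upper_edges V E s t k"
  then obtain u v kf kb P0 Q0 where e: "e = (u, v)" and uv: "(u, v) \<in> E"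
    and P0: "P0 \<in> fwd_paths V E s t kf u" and Q0: "Q0 \<in> bwd_paths V E s t kb v"
    and len: "kf + 1 + kb \<le> k" and EV: "EV_fwd V E s t kf u \<inter> EV_bwd V E s t kb v = {}"
    unfolding spg_upper_edges_def by blast
  obtain P Q where "P \<in> fwd_paths V E s t kf u" "Q \<in> bwd_paths V E s t kb v"
    "set P \<inter> set Q = {}"
  proof (cases "kf \<le> 1")
    case True
    obtain Q where "Q \<in> bwd_paths V E s t kb v" "set P0 \<inter> set Q = {}"
      by (rule disjoint_bwd_path_if_short_fwd_path[OF P0 True EV])
    with P0 show thesis
      by (rule that)
  next
    case False
    with len assms have "kb \<le> 1" by linarith
    then obtain P where "P \<in> fwd_paths V E s t kf u" "set P \<inter> set Q0 = {}"
      by (rule disjoint_fwd_path_if_short_bwd_path[OF Q0 _ EV])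
    then show thesis
      using Q0 that by blast
  qed
  then show "e \<in> spg_edges V E s t k"
    unfolding e using uv len by (rule spg_edges_of_disjoint_paths)
qed

theorem theorem4p8:
  fixes V :: "'a set" and E :: "('a \<times> 'a) set" and s t :: 'a and k :: nat
  assumes "finite V" and "E \<subseteq> V \<times> V"
    and "s \<in> V" and "t \<in> V" and "s \<noteq> t"
    and "1 \<le> k" and "k \<le> 4"
  shows "spg_upper_edges V E s t k = spg_edges V E s t k"
  using spg_upper_edges_subset_spg_edges[OF \<open>k \<le> 4\<close>] spg_edges_subset_spg_upper_edges
  by (rule equalityI)

end
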